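(* $\{\delta\in N:\delta^2=-4,\ \delta/2\in N^*\}=\{r+\rho(r):r\in N,\ r^2=-2\}.$
   Context: Lattices: $U$ has Gram matrix $\begin{pmatrix}0&1\\1&0\end{pmatrix}$; $D_4$ negative definite; $U(2)$ is $U$ with doubled form. $N=U\oplus U(2)\oplus D_4\oplus D_4$, $N^*$ its dual. $\rho=\rho_1\oplus\rho_0\oplus\rho_0\in O(N)$, where for $D_4=\{x\in\mathbb Z^4:\sum x_i\equiv0\bmod 2\}$ (negative standard inner product) $\rho_0(x_1,x_2,x_3,x_4)=(x_2,-x_1,x_4,-x_3)$, and for standard hyperbolic bases $e,f$ of $U$, $e',f'$ of $U(2)$, $\rho_1(e)=-e-e'$, $\rho_1(f)=f-f'$, $\rho_1(e')=e'+2e$, $\rho_1(f')=2f-f'$. $\rho$ acts trivially on $N^*/N$. *)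

theory Defs
  imports Complex_Main
begin

text \<open>Model of N = U + U(2) + D4 + D4 in coordinates: a vector is a function
  nat => 'a supported on {0..<12}.  Coordinates 0,1 are the coefficients of e,f (basis of U),
  2,3 those of e',f' (basis of U(2)), 4..7 the first D4 (as a sublattice of Z^4),
  8..11 the second D4.\<close>

definition supp12 :: "(nat \<Rightarrow> 'a::zero) \<Rightarrow> bool" where
  "supp12 v \<longleftrightarrow> (\<forall>i\<ge>12. v i = 0)"

definition bil :: "(nat \<Rightarrow> 'a::comm_ring_1) \<Rightarrow> (nat \<Rightarrow> 'a) \<Rightarrow> 'a" where
  "bil v w = v 0 * w 1 + v 1 * w 0 + 2 * (v 2 * w 3 + v 3 * w 2)
             - (\<Sum>i\<in>{4..<12}. v i * w i)"

definition latN :: "(nat \<Rightarrow> int) set" where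
  "latN = {v. supp12 v \<and> even (\<Sum>i\<in>{4..<8}. v i) \<and> even (\<Sum>i\<in>{8..<12}. v i)}"

definition latNdual :: "(nat \<Rightarrow> rat) set" where
  "latNdual = {w. supp12 w \<and> (\<forall>v\<in>latN. bil w (\<lambda>i. of_int (v i)) \<in> \<int>)}"

text \<open>rho = rho1 + rho0 + rho0.  For v = ae+bf+ce'+df':
  rho1 v = (-a+2c)e + (b+2d)f + (-a+c)e' + (-b-d)f'.
  rho0(x1,x2,x3,x4) = (x2,-x1,x4,-x3).\<close>
definition rho :: "(nat \<Rightarrow> int) \<Rightarrow> (nat \<Rightarrow> int)" where
  "rho v = (\<lambda>i.
     if i = 0 then - v 0 + 2 * v 2
     else if i = 1 then v 1 + 2 * v 3
     else if i = 2 then - v 0 + v 2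
     else if i = 3 then - v 1 - v 3
     else if i = 4 then v 5 else if i = 5 then - v 4
     else if i = 6 then v 7 else if i = 7 then - v 6
     else if i = 8 then v 9 else if i = 9 then - v 8
     else if i = 10 then v 11 else if i = 11 then - v 10
     else 0)"

end

theory Submission
  imports Defs
begin

text \<open>The vectors r + \<rho> r form the image (1 + \<rho>) N, and since \<rho> is an isometry
  with \<rho>^2 = -1, so that r \<cdot> \<rho> r = 0, one has (r + \<rho> r)^2 = 2 r^2.  Both sides are
  therefore the vectors of norm -4 in a sublattice: N \<inter> 2 N* = 2 N* on the left,
  (1 + \<rho>) N on the right.  In coordinates 2 N* is explicit; (1 + \<rho>) N \<subseteq> 2 N* is a
  parity check, and conversely (1 + \<rho>)(1 - \<rho>) = 2 shows that (\<delta> - \<rho> \<delta>) / 2 is a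
  preimage of \<delta> \<in> 2 N*.\<close>

text \<open>2 N*: U* = U, U(2)* = U(2) / 2, and 2 D4* consists of the vectors whose
  coordinates all have the same parity.\<close>
definition twice_latNdual :: "(nat \<Rightarrow> int) set" where
  "twice_latNdual = {d. supp12 d \<and> even (d 0) \<and> even (d 1)
     \<and> (\<forall>i\<in>{4..<8}. even (d i - d 4)) \<and> (\<forall>i\<in>{8..<12}. even (d i - d 8))}"

lemma less_12_iff: "(i::nat) < 12 \<longleftrightarrow> i \<in> {0, 1, 2, 3, 4, 5, 6, 7, 8, 9, 10, 11}"
  by (auto simp: eval_nat_numeral less_Suc_eq)

lemma bil_expand:
  "bil v w = v 0 * w 1 + v 1 * w 0 + 2 * (v 2 * w 3 + v 3 * w 2)
     - (v 4 * w 4 + v 5 * w 5 + v 6 * w 6 + v 7 * w 7 + v 8 * w 8 + v 9 * w 9 + v 10 * w 10 + v 11 * w 11)"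
proof -
  have "{4..<12::nat} = {4,5,6,7,8,9,10,11}" by auto
  then show ?thesis unfolding bil_def by (simp add: algebra_simps)
qed

lemma bil_blocks:
  "bil v w = v 0 * w 1 + v 1 * w 0 + 2 * (v 2 * w 3 + v 3 * w 2)
     - ((\<Sum>i\<in>{4..<8}. v i * w i) + (\<Sum>i\<in>{8..<12}. v i * w i))"
  unfolding bil_def by (simp add: sum.atLeastLessThan_concat)

lemma latN_iff:
  "v \<in> latN \<longleftrightarrow> supp12 v \<and> even (v 4 + v 5 + v 6 + v 7) \<and> even (v 8 + v 9 + v 10 + v 11)"
proof -
  have "{4..<8::nat} = {4,5,6,7}" "{8..<12::nat} = {8,9,10,11}" by auto
  then show ?thesis unfolding latN_def by (simp add: algebra_simps)
qed

lemma twice_latNdual_iff: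
  "d \<in> twice_latNdual \<longleftrightarrow> supp12 d \<and> even (d 0) \<and> even (d 1)
     \<and> even (d 4 - d 5) \<and> even (d 4 - d 6) \<and> even (d 4 - d 7)
     \<and> even (d 8 - d 9) \<and> even (d 8 - d 10) \<and> even (d 8 - d 11)"
proof -
  have "{4..<8::nat} = {4,5,6,7}" "{8..<12::nat} = {8,9,10,11}" by auto
  then show ?thesis unfolding twice_latNdual_def by (auto simp: algebra_simps)
qed

lemma even_sum_mult_if_same_parity:
  fixes x v :: "'a \<Rightarrow> int"
  assumes "\<forall>i\<in>A. even (x i - c)" and "even (\<Sum>i\<in>A. v i)"
  shows "even (\<Sum>i\<in>A. x i * v i)"
proof -
  have "(\<Sum>i\<in>A. x i * v i) = (\<Sum>i\<in>A. (x i - c) * v i + c * v i)"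
    by (simp add: algebra_simps)
  also have "\<dots> = (\<Sum>i\<in>A. (x i - c) * v i) + c * (\<Sum>i\<in>A. v i)"
    by (simp add: sum.distrib sum_distrib_left)
  finally have split: "(\<Sum>i\<in>A. x i * v i) = (\<Sum>i\<in>A. (x i - c) * v i) + c * (\<Sum>i\<in>A. v i)" .
  have "even (\<Sum>i\<in>A. (x i - c) * v i)"
    using assms(1) by (intro dvd_sum) simp
  then show ?thesis using assms(2) by (simp add: split)
qed

lemma twice_latNdual_subset_latN: "twice_latNdual \<subseteq> latN"
proof
  fix d assume "d \<in> twice_latNdual"
  then have "supp12 d"
    and block1: "\<forall>i\<in>{4..<8}. even (d i - d 4)" and block2: "\<forall>i\<in>{8..<12}. even (d i - d 8)"
    unfolding twice_latNdual_def by blast+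
  have "even (\<Sum>i\<in>{4..<8}. d i * 1)" "even (\<Sum>i\<in>{8..<12}. d i * 1)"
    by (rule even_sum_mult_if_same_parity[OF block1], simp)
       (rule even_sum_mult_if_same_parity[OF block2], simp)
  then show "d \<in> latN" using \<open>supp12 d\<close> unfolding latN_def by simp
qed

lemma even_bil_if_twice_latNdual:
  assumes "d \<in> twice_latNdual" and "v \<in> latN"
  shows "even (bil d v)"
proof -
  have "even (d 0)" "even (d 1)"
    using assms(1) unfolding twice_latNdual_def by blast+
  moreover have "even (\<Sum>i\<in>{4..<8}. d i * v i)" "even (\<Sum>i\<in>{8..<12}. d i * v i)"
    using assms unfolding twice_latNdual_def latN_def
    by (blast intro: even_sum_mult_if_same_parity)+
  ultimately show ?thesis unfolding bil_blocks by simp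
qed

lemma twice_latNdual_if_even_bil:
  assumes "supp12 d" and even_bil: "\<And>v. v \<in> latN \<Longrightarrow> even (bil d v)"
  shows "d \<in> twice_latNdual"
proof -
  have "even (bil d (\<lambda>i. of_bool (i = j \<or> i = k)))"
    if "(j, k) \<in> {(0, 0), (1, 1), (4, 5), (4, 6), (4, 7), (8, 9), (8, 10), (8, 11)}" for j k
    using that by (intro even_bil) (auto simp: latN_iff supp12_def)
  from this[of 1 1] this[of 0 0] this[of 4 5] this[of 4 6] this[of 4 7]
    this[of 8 9] this[of 8 10] this[of 8 11]
  show ?thesis using assms(1) by (simp add: twice_latNdual_iff bil_expand)
qed

lemma half_int_iff_even: "(of_int n / 2 :: rat) \<in> \<int> \<longleftrightarrow> even n"
proof
  assume "(of_int n / 2 :: rat) \<in> \<int>"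
  then obtain m where "(of_int n / 2 :: rat) = of_int m" by (auto elim: Ints_cases)
  then have "n = 2 * m" by linarith
  then show "even n" by simp
qed (auto elim: evenE)

lemma bil_half_of_int:
  "bil (\<lambda>i. of_int (d i) / 2 :: rat) (\<lambda>i. of_int (v i)) = of_int (bil d v) / 2"
  unfolding bil_expand by (simp add: field_simps)

lemma half_mem_latNdual_iff:
  "(\<lambda>i. of_int (d i) / 2 :: rat) \<in> latNdual \<longleftrightarrow> d \<in> twice_latNdual"
proof -
  have "(\<lambda>i. of_int (d i) / 2 :: rat) \<in> latNdual \<longleftrightarrow> supp12 d \<and> (\<forall>v\<in>latN. even (bil d v))"
    unfolding latNdual_def supp12_def by (simp add: bil_half_of_int half_int_iff_even)
  then show ?thesis
    using twice_latNdual_if_even_bil even_bil_if_twice_latNdual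
    unfolding twice_latNdual_def by blast
qed

lemma rho_diff: "rho (\<lambda>i. v i - w i) = (\<lambda>i. rho v i - rho w i)"
  by (simp add: rho_def fun_eq_iff)

lemma rho_mult: "rho (\<lambda>i. c * v i) = (\<lambda>i. c * rho v i)"
  by (simp add: rho_def fun_eq_iff algebra_simps)

lemma rho_rho:
  assumes "supp12 v"
  shows "rho (rho v) = (\<lambda>i. - v i)"
proof
  fix i
  show "rho (rho v) i = - v i"
  proof (cases "i < 12")
    case True
    then show ?thesis by (auto simp: rho_def less_12_iff)
  qed (use assms in \<open>simp add: rho_def supp12_def\<close>)
qed

lemma bil_add_rho_self: "bil (\<lambda>i. r i + rho r i) (\<lambda>i. r i + rho r i) = 2 * bil r r"
  unfolding bil_expand rho_def by (simp add: algebra_simps)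

lemma add_rho_mem_twice_latNdual:
  assumes "r \<in> latN"
  shows "(\<lambda>i. r i + rho r i) \<in> twice_latNdual"
  using assms unfolding latN_iff twice_latNdual_iff supp12_def rho_def by auto

lemma even_sub_rho_if_twice_latNdual:
  assumes "d \<in> twice_latNdual"
  shows "even (d i - rho d i)"
proof (cases "i < 12")
  case True
  then show ?thesis using assms by (auto simp: less_12_iff twice_latNdual_iff rho_def)
qed (use assms in \<open>simp add: twice_latNdual_def supp12_def rho_def\<close>)

lemma ex_add_rho_preimage:
  assumes d: "d \<in> twice_latNdual"
  shows "\<exists>r\<in>latN. d = (\<lambda>i. r i + rho r i)"
proof -
  have supp: "supp12 d" using d by (simp add: twice_latNdual_def)
  define r where "r = (\<lambda>i. (d i - rho d i) div 2)"
  have twice_r: "2 * r i = d i - rho d i" for i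
    using even_sub_rho_if_twice_latNdual[OF d] by (simp add: r_def)
  have twice_rho_r: "2 * rho r i = rho d i + d i" for i
  proof -
    have "(\<lambda>i. 2 * rho r i) = rho (\<lambda>i. d i - rho d i)"
      by (simp add: twice_r flip: rho_mult)
    also have "\<dots> = (\<lambda>i. rho d i + d i)"
      by (simp add: rho_diff rho_rho[OF supp])
    finally show ?thesis by (simp add: fun_eq_iff)
  qed
  have "d = (\<lambda>i. r i + rho r i)"
  proof
    show "d i = r i + rho r i" for i
      using twice_r[of i] twice_rho_r[of i] by linarith
  qed
  moreover have "r \<in> latN"
  proof -
    have "supp12 r" using supp by (simp add: supp12_def r_def rho_def)
    moreover have "r 4 + r 5 + r 6 + r 7 = d 4 + d 6" "r 8 + r 9 + r 10 + r 11 = d 8 + d 10"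
      using twice_r[of 4] twice_r[of 5] twice_r[of 6] twice_r[of 7]
        twice_r[of 8] twice_r[of 9] twice_r[of 10] twice_r[of 11]
      by (simp_all add: rho_def)
    ultimately show ?thesis using d by (auto simp: latN_iff twice_latNdual_iff)
  qed
  ultimately show ?thesis by blast
qed

lemma add_rho_image_latN: "(\<lambda>r i. r i + rho r i) ` latN = twice_latNdual"
  using add_rho_mem_twice_latNdual ex_add_rho_preimage by blast

theorem lemma4p5:
  shows "{\<delta>. \<delta> \<in> latN \<and> bil \<delta> \<delta> = -4 \<and> (\<lambda>i. of_int (\<delta> i) / 2 :: rat) \<in> latNdual}
       = {(\<lambda>i. r i + rho r i) | r. r \<in> latN \<and> bil r r = -2}"
proof -
  have "{\<delta>. \<delta> \<in> latN \<and> bil \<delta> \<delta> = -4 \<and> (\<lambda>i. of_int (\<delta> i) / 2 :: rat) \<in> latNdual}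
      = {\<delta> \<in> twice_latNdual. bil \<delta> \<delta> = -4}"
    using twice_latNdual_subset_latN by (auto simp: half_mem_latNdual_iff)
  also have "\<dots> = {\<delta> \<in> (\<lambda>r i. r i + rho r i) ` latN. bil \<delta> \<delta> = -4}"
    by (simp add: add_rho_image_latN)
  also have "\<dots> = {(\<lambda>i. r i + rho r i) | r. r \<in> latN \<and> bil r r = -2}"
    by (auto simp: bil_add_rho_self)
  finally show ?thesis .
qed

end
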